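(* For every $n\in\mathbb Z$ and every $j\in\{0,1,\dots,r+1\}$, $$c_j=Z_j^{(G_r)}\bigl(y_{1,n},y_{2,n},\dots,y_{2r+1,n}\bigr),$$ where $c_j$ are the conserved quantities defined below. In particular, taking $n=0$, $c_j$ is the $j$-particle hard particle partition function on $G_r$ with vertex weights $y_{2\alpha-1}=\frac{R_{\alpha-1,0}R_{\alpha,1}}{R_{\alpha,0}R_{\alpha-1,1}}$ ($1\le\alpha\le r+1$) and $y_{2\alpha}=\frac{R_{\alpha-1,0}R_{\alpha+1,1}}{R_{\alpha,0}R_{\alpha,1}}$ ($1\le\alpha\le r$).
   Context: Fix $r\ge1$, $I_r=\{1,\dots,r\}$. Let $R_{1,0},\dots,R_{r,0},R_{1,1},\dots,R_{r,1}$ be algebraically independent indeterminates over $\mathbb Q$ and $(R_{\alpha,n})_{0\le\alpha\le r+1,n\in\mathbb Z}$ the $A_r$ $Q$-system: the unique family of nonzero elements of $\mathbb Q(R_{1,0},\dots,R_{r,1})$ with these initial values, $R_{0,n}=R_{r+1,n}=1$, and $R_{\alpha,n+1}R_{\alpha,n-1}=R_{\alpha,n}^2+R_{\alpha+1,n}R_{\alpha-1,n}$ ($\alpha\in I_r$, $n\in\mathbb Z$). Conserved quantities: for $k\in\{0,\dots,r+1\}$, $c_k$ is the determinant of the matrix obtained from the $(r+2)\times(r+2)$ matrix $(R_{1,n+i+j-r-3})_{1\le i,j\le r+2}$ by deleting row $r+2$ and column $r+2-k$; this is independent of $n$. Weights: $y_{2\alpha-1,n}=\frac{R_{\alpha-1,n}R_{\alpha,n+1}}{R_{\alpha,n}R_{\alpha-1,n+1}}$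 for $1\le\alpha\le r+1$ and $y_{2\alpha,n}=\frac{R_{\alpha-1,n}R_{\alpha+1,n+1}}{R_{\alpha,n}R_{\alpha,n+1}}$ for $1\le\alpha\le r$. The graph $G_r$ has vertices $1,\dots,2r+1$ and edges $\{1,2\}$, $\{2k,2k+1\}$ for $1\le k\le r$, and $\{2k-2,2k\}$, $\{2k-1,2k\}$ for $2\le k\le r$. A hard particle configuration on a graph is a set of vertices no two of which are joined by an edge. Given vertex weights $y_1,\dots,y_{2r+1}$, the weight of a configuration $C$ is $\prod_{i\in C}y_i$; $Z_j^{(G_r)}(y_1,\dots,y_{2r+1})$ denotes the sum of the weights of all hard particle configurations on $G_r$ of cardinality $j$. *)

theory Defs
  imports "Jordan_Normal_Form.Determinant" "HOL-Library.Poly_Mapping"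
begin

text \<open>Algebraic independence over the rationals of the family x indexed by I:
  every rational polynomial (coefficients indexed by monomials, which are finitely
  supported exponent maps with variables in I) vanishing at x is zero.\<close>
definition alg_indep_rat :: "'i set \<Rightarrow> ('i \<Rightarrow> 'a::field_char_0) \<Rightarrow> bool" where
  "alg_indep_rat I x \<longleftrightarrow>
     (\<forall>p :: ('i \<Rightarrow>\<^sub>0 nat) \<Rightarrow>\<^sub>0 rat.
        (\<forall>m\<in>Poly_Mapping.keys p. Poly_Mapping.keys m \<subseteq> I) \<and>
        (\<Sum>m\<in>Poly_Mapping.keys p. of_rat (Poly_Mapping.lookup p m) * (\<Prod>i\<in>Poly_Mapping.keys (m :: 'i \<Rightarrow>\<^sub>0 nat). x i ^ Poly_Mapping.lookup m i)) = 0
        \<longrightarrow> p = 0)"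

definition is_Q_system :: "nat \<Rightarrow> (nat \<Rightarrow> int \<Rightarrow> 'a::field) \<Rightarrow> bool" where
  "is_Q_system r R \<longleftrightarrow>
     (\<forall>n. R 0 n = 1 \<and> R (r + 1) n = 1) \<and>
     (\<forall>\<alpha>\<in>{1..r}. \<forall>n. R \<alpha> n \<noteq> 0) \<and>
     (\<forall>\<alpha>\<in>{1..r}. \<forall>n. R \<alpha> (n + 1) * R \<alpha> (n - 1) = (R \<alpha> n)\<^sup>2 + R (\<alpha> + 1) n * R (\<alpha> - 1) n)"

text \<open>Conserved quantity c_k: the (r+2)x(r+2) matrix (R_{1,n+i+j-r-3})_{1<=i,j<=r+2}
  (here 0-based indices i' = i-1, j' = j-1) with row r+2 and column r+2-k deleted
  (0-based: row r+1, column r+1-k).\<close>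
definition cons_qty :: "nat \<Rightarrow> (nat \<Rightarrow> int \<Rightarrow> 'a::field) \<Rightarrow> nat \<Rightarrow> int \<Rightarrow> 'a" where
  "cons_qty r R k n =
     det (mat_delete
            (mat (r + 2) (r + 2) (\<lambda>(i, j). R 1 (n + (int i + 1) + (int j + 1) - int r - 3)))
            (r + 1) (r + 1 - k))"

definition yw :: "(nat \<Rightarrow> int \<Rightarrow> 'a::field) \<Rightarrow> nat \<Rightarrow> int \<Rightarrow> 'a" where
  "yw R v n =
     (if odd v then
        (let \<alpha> = (v + 1) div 2 in
           R (\<alpha> - 1) n * R \<alpha> (n + 1) / (R \<alpha> n * R (\<alpha> - 1) (n + 1)))
      else
        (let \<alpha> = v div 2 in
           R (\<alpha> - 1) n * R (\<alpha> + 1) (n + 1) / (R \<alpha> n * R \<alpha> (n + 1))))"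

definition G_vertices :: "nat \<Rightarrow> nat set" where
  "G_vertices r = {1..2 * r + 1}"

definition G_edges :: "nat \<Rightarrow> nat set set" where
  "G_edges r = {{1, 2}}
     \<union> {{2 * k, 2 * k + 1} | k. 1 \<le> k \<and> k \<le> r}
     \<union> {{2 * k - 2, 2 * k} | k. 2 \<le> k \<and> k \<le> r}
     \<union> {{2 * k - 1, 2 * k} | k. 2 \<le> k \<and> k \<le> r}"

definition hard_particle_config :: "'v set \<Rightarrow> 'v set set \<Rightarrow> 'v set \<Rightarrow> bool" where
  "hard_particle_config V E C \<longleftrightarrow> C \<subseteq> V \<and> (\<forall>e\<in>E. \<not> e \<subseteq> C)"

definition Z_hp :: "'v set \<Rightarrow> 'v set set \<Rightarrow> nat \<Rightarrow> ('v \<Rightarrow> 'a::comm_ring_1) \<Rightarrow> 'a" where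
  "Z_hp V E j w = (\<Sum>C\<in>{C. hard_particle_config V E C \<and> card C = j}. \<Prod>i\<in>C. w i)"

end

theory Submission
  imports Defs
begin

(* Write u n = R 1 n.  The proof combines a determinantal and a combinatorial description
   of one and the same linear recurrence for u.
   (1) Desnanot-Jacobi condensation applied to Hankel matrices of u shows that the k x k
       Hankel determinants of u are the values R k of the Q-system; in particular all
       (r+1) x (r+1) Hankel determinants equal R (r+1) = 1.
   (2) Laplace expansion of a matrix with a repeated row shows that c_0 = 1, ..., c_(r+1)
       solve the linear system  sum_k (-1)^k c_k u (m + i - k) = 0  (i = 0..r); as its
       matrix is an invertible Hankel matrix, this system has at most one solution with
       leading coefficient 1.
   (3) The weights y factor a Lax matrix T_n = A_n B_n (A_n lower unitriangular, B_n upper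
       bidiagonal) with B_n A_n = T_(n+1), so that the corner entry of T_n^s is u (n+s) / u n.
       The polynomial generated by the three-term recurrence of the Jacobi type formed from
       B_n and A_n^-1 kills the first row of T_n and thus yields a linear recurrence for u.
   (4) The coefficients of that polynomial are, up to sign, the hard particle partition
       functions of the initial segments of G_r, which obey the same three-term recurrence.
   Hence the partition functions at any n solve the system of (2), and uniqueness gives the
   theorem. *)

section \<open>Determinant identities\<close>

lemma det_single_entry_column:
  fixes A :: "'a::comm_ring_1 mat"
  assumes A: "A \<in> carrier_mat n n" and j: "j < n" and i0: "i0 < n"
    and zero: "\<And>i. i < n \<Longrightarrow> i \<noteq> i0 \<Longrightarrow> A $$ (i,j) = 0"
  shows "det A = A $$ (i0,j) * cofactor A i0 j"
proof -
  have "det A = (\<Sum>i<n. A $$ (i,j) * cofactor A i j)" by (rule laplace_expansion_column[OF A j])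
  also have "\<dots> = (\<Sum>i<n. if i = i0 then A $$ (i0,j) * cofactor A i0 j else 0)"
    by (rule sum.cong) (auto simp: zero)
  also have "\<dots> = A $$ (i0,j) * cofactor A i0 j" using i0 by simp
  finally show ?thesis .
qed

lemma det_2x2:
  fixes E :: "'a::comm_ring_1 mat"
  assumes E: "E \<in> carrier_mat 2 2"
  shows "det E = E $$ (0,0) * E $$ (1,1) - E $$ (0,1) * E $$ (1,0)"
proof -
  have "det E = (\<Sum>i<2. E $$ (i,0) * cofactor E i 0)" by (rule laplace_expansion_column[OF E]) auto
  also have "\<dots> = E $$ (0,0) * cofactor E 0 0 + E $$ (1,0) * cofactor E 1 0"
    by (simp add: numeral_2_eq_2)
  also have "cofactor E 0 0 = E $$ (1,1)" unfolding cofactor_def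
    by (subst det_single) (use E in \<open>auto simp: mat_delete_def\<close>)
  also have "cofactor E 1 0 = - E $$ (0,1)" unfolding cofactor_def
    by (subst det_single) (use E in \<open>auto simp: mat_delete_def\<close>)
  finally show ?thesis by (simp add: algebra_simps)
qed

lemma det_identity_inner_columns:
  fixes E :: "'a::comm_ring_1 mat"
  assumes "E \<in> carrier_mat (Suc (Suc k)) (Suc (Suc k))"
    and "\<And>i j. i < Suc (Suc k) \<Longrightarrow> 0 < j \<Longrightarrow> j < Suc k \<Longrightarrow> E $$ (i,j) = (if i = j then 1 else 0)"
  shows "det E = E $$ (0,0) * E $$ (Suc k, Suc k) - E $$ (0, Suc k) * E $$ (Suc k, 0)"
using assms proof (induction k arbitrary: E)
  case 0 then show ?case using det_2x2[of E] by (simp add: numeral_2_eq_2)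
next
  case (Suc k)
  let ?E' = "mat_delete E 1 1"
  have "det E = E $$ (1,1) * cofactor E 1 1"
    by (rule det_single_entry_column[OF Suc.prems(1)]) (auto simp: Suc.prems(2))
  hence "det E = det ?E'" using Suc.prems(2)[of 1 1] by (simp add: cofactor_def)
  also have "det ?E' = ?E' $$ (0,0) * ?E' $$ (Suc k, Suc k) - ?E' $$ (0, Suc k) * ?E' $$ (Suc k, 0)"
    by (rule Suc.IH) (use Suc.prems in \<open>auto simp: mat_delete_def\<close>)
  finally show ?case using Suc.prems(1) by (simp add: mat_delete_def)
qed

lemma mult_adj_in_columns:
  fixes A :: "'a::comm_ring_1 mat"
  assumes A: "A \<in> carrier_mat n n"
  shows "A * mat n n (\<lambda>(i,j). if j \<in> S then adj_mat A $$ (i,j) else if i = j then 1 else 0)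
       = mat n n (\<lambda>(i,j). if j \<in> S then (if i = j then det A else 0) else A $$ (i,j))"
    (is "A * ?E = ?F")
proof (rule eq_matI)
  fix i j assume "i < dim_row ?F" "j < dim_col ?F"
  hence i: "i < n" and j: "j < n" by auto
  have adj: "adj_mat A \<in> carrier_mat n n" "A * adj_mat A = det A \<cdot>\<^sub>m 1\<^sub>m n"
    using adj_mat[OF A] by auto
  have "(A * ?E) $$ (i,j) = (\<Sum>l\<in>{0..<n}. A $$ (i,l) * ?E $$ (l,j))"
    using A i j by (simp add: scalar_prod_def)
  also have "\<dots> = ?F $$ (i,j)"
  proof (cases "j \<in> S")
    case True
    have "(\<Sum>l\<in>{0..<n}. A $$ (i,l) * ?E $$ (l,j)) = (A * adj_mat A) $$ (i,j)"
      using A adj(1) i j True by (simp add: scalar_prod_def)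
    also have "\<dots> = ?F $$ (i,j)" using i j True unfolding adj(2) by simp
    finally show ?thesis .
  next
    case False
    have "(\<Sum>l\<in>{0..<n}. A $$ (i,l) * ?E $$ (l,j)) = (\<Sum>l\<in>{0..<n}. if l = j then A $$ (i,j) else 0)"
      by (rule sum.cong) (use j False in auto)
    also have "\<dots> = ?F $$ (i,j)" using i j False by simp
    finally show ?thesis .
  qed
  finally show "(A * ?E) $$ (i,j) = ?F $$ (i,j)" .
qed (use A in auto)

text \<open>The Desnanot-Jacobi identity multiplied by det A: take determinants in the previous
  lemma for the first and the last column.\<close>
lemma desnanot_jacobi_times_det:
  fixes A :: "'a::comm_ring_1 mat"
  assumes A: "A \<in> carrier_mat (Suc (Suc k)) (Suc (Suc k))"
  shows "det A * (det (mat_delete A 0 0) * det (mat_delete A (Suc k) (Suc k))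
           - det (mat_delete A 0 (Suc k)) * det (mat_delete A (Suc k) 0))
         = det A * det A * det (mat_delete (mat_delete A (Suc k) (Suc k)) 0 0)"
proof -
  define N where "N = Suc (Suc k)"
  define S where "S = {0, Suc k}"
  define E where "E = mat N N (\<lambda>(i,j). if j \<in> S then adj_mat A $$ (i,j) else if i = j then 1 else 0)"
  define F where "F = mat N N (\<lambda>(i,j). if j \<in> S then (if i = j then det A else 0) else A $$ (i,j))"
  have AN: "A \<in> carrier_mat N N" using A unfolding N_def .
  have E: "E \<in> carrier_mat N N" and F: "F \<in> carrier_mat N N" unfolding E_def F_def by auto
  have "A * E = F" unfolding E_def F_def by (rule mult_adj_in_columns[OF AN])
  hence "det A * det E = det F" using det_mult[OF AN E] by simp
  moreover have "det E = det (mat_delete A 0 0) * det (mat_delete A (Suc k) (Suc k))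
           - det (mat_delete A 0 (Suc k)) * det (mat_delete A (Suc k) 0)"
  proof -
    have "det E = E $$ (0,0) * E $$ (Suc k, Suc k) - E $$ (0, Suc k) * E $$ (Suc k, 0)"
      by (rule det_identity_inner_columns) (use E in \<open>auto simp: N_def E_def S_def\<close>)
    moreover have "(-1::'a)^(Suc k) * (-1)^(Suc k) = 1" by (simp add: power_add[symmetric])
    ultimately show ?thesis
      using A by (simp add: E_def N_def S_def adj_mat_def cofactor_def algebra_simps)
  qed
  moreover have "det F = det A * det A * det (mat_delete (mat_delete A (Suc k) (Suc k)) 0 0)"
  proof -
    define F1 where "F1 = mat_delete F 0 0"
    have F1: "F1 \<in> carrier_mat (Suc k) (Suc k)" using F by (simp add: F1_def N_def mat_delete_def)
    have "det F = F $$ (0,0) * cofactor F 0 0"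
      by (rule det_single_entry_column[OF F]) (auto simp: N_def F_def S_def)
    hence "det F = det A * det F1" by (simp add: F_def N_def S_def cofactor_def F1_def)
    moreover have "det F1 = F1 $$ (k,k) * cofactor F1 k k"
      by (rule det_single_entry_column[OF F1]) (auto simp: N_def F_def F1_def S_def mat_delete_def)
    moreover have "F1 $$ (k,k) = det A" by (simp add: N_def F_def F1_def S_def mat_delete_def)
    moreover have "mat_delete F1 k k = mat_delete (mat_delete A (Suc k) (Suc k)) 0 0"
      by (rule eq_matI) (use A in \<open>auto simp: N_def F_def F1_def S_def mat_delete_def\<close>)
    ultimately show ?thesis by (simp add: cofactor_def)
  qed
  ultimately show ?thesis by (simp add: algebra_simps)
qed

definition bump_corner :: "'a::comm_ring_1 mat \<Rightarrow> 'a mat" where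
  "bump_corner M = mat (dim_row M) (dim_col M) (\<lambda>(i,j). M $$ (i,j) + (if i = 0 \<and> j = 0 then 1 else 0))"

lemma bump_corner_carrier[simp]: "M \<in> carrier_mat n m \<Longrightarrow> bump_corner M \<in> carrier_mat n m"
  by (simp add: bump_corner_def)

lemma det_bump_corner:
  fixes M :: "'a::comm_ring_1 mat"
  assumes M: "M \<in> carrier_mat n n" and n: "0 < n"
  shows "det (bump_corner M) = det M + det (mat_delete M 0 0)"
proof -
  have cof: "cofactor (bump_corner M) 0 j = cofactor M 0 j" for j
  proof -
    have "mat_delete (bump_corner M) 0 j = mat_delete M 0 j"
      by (rule eq_matI) (use M in \<open>auto simp: bump_corner_def mat_delete_def\<close>)
    thus ?thesis by (simp add: cofactor_def)
  qed
  have "det (bump_corner M) = (\<Sum>j<n. bump_corner M $$ (0,j) * cofactor (bump_corner M) 0 j)"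
    by (rule laplace_expansion_row[OF bump_corner_carrier[OF M] n])
  also have "\<dots> = (\<Sum>j<n. M $$ (0,j) * cofactor M 0 j + (if j = 0 then cofactor M 0 0 else 0))"
  proof (rule sum.cong[OF refl])
    fix j assume "j \<in> {..<n}"
    hence "bump_corner M $$ (0,j) = M $$ (0,j) + (if j = 0 then 1 else 0)"
      using M n by (simp add: bump_corner_def)
    thus "bump_corner M $$ (0,j) * cofactor (bump_corner M) 0 j
        = M $$ (0,j) * cofactor M 0 j + (if j = 0 then cofactor M 0 0 else 0)"
      by (simp add: cof algebra_simps)
  qed
  also have "\<dots> = det M + cofactor M 0 0"
    by (simp add: sum.distrib laplace_expansion_row[OF M n] n)
  finally show ?thesis by (simp add: cofactor_def)
qed

text \<open>Desnanot-Jacobi identity (Dodgson condensation) over a field.  If det A = 0, apply the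
  multiplied identity to the matrix with bumped corner, whose determinant is the nonzero
  top left minor of A.\<close>
lemma desnanot_jacobi:
  fixes A :: "'a::field mat"
  assumes A: "A \<in> carrier_mat (Suc (Suc k)) (Suc (Suc k))"
    and nz: "det (mat_delete A 0 0) \<noteq> 0"
  shows "det A * det (mat_delete (mat_delete A (Suc k) (Suc k)) 0 0)
         = det (mat_delete A 0 0) * det (mat_delete A (Suc k) (Suc k))
           - det (mat_delete A 0 (Suc k)) * det (mat_delete A (Suc k) 0)"
proof (cases "det A = 0")
  case False
  thus ?thesis using desnanot_jacobi_times_det[OF A] by simp
next
  case True
  let ?B = "bump_corner A" and ?L = "mat_delete A (Suc k) (Suc k)"
  have L: "?L \<in> carrier_mat (Suc k) (Suc k)" using A by (simp add: mat_delete_def)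
  have same_minors: "mat_delete ?B 0 0 = mat_delete A 0 0" "mat_delete ?B 0 (Suc k) = mat_delete A 0 (Suc k)"
    "mat_delete ?B (Suc k) 0 = mat_delete A (Suc k) 0" "mat_delete ?B (Suc k) (Suc k) = bump_corner ?L"
    "mat_delete (bump_corner ?L) 0 0 = mat_delete ?L 0 0"
    by (rule eq_matI; use A in \<open>auto simp: bump_corner_def mat_delete_def\<close>)+
  have "det ?B = det (mat_delete A 0 0)" using det_bump_corner[OF A] True by simp
  moreover have "det (bump_corner ?L) = det ?L + det (mat_delete ?L 0 0)"
    by (rule det_bump_corner[OF L]) simp
  moreover note desnanot_jacobi_times_det[OF bump_corner_carrier[OF A]]
  ultimately have "det (mat_delete A 0 0) * (det (mat_delete A 0 0) * (det ?L + det (mat_delete ?L 0 0))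
           - det (mat_delete A 0 (Suc k)) * det (mat_delete A (Suc k) 0))
         = det (mat_delete A 0 0) * det (mat_delete A 0 0) * det (mat_delete ?L 0 0)"
    unfolding same_minors by simp
  hence "det (mat_delete A 0 0) * (det ?L + det (mat_delete ?L 0 0))
           - det (mat_delete A 0 (Suc k)) * det (mat_delete A (Suc k) 0)
         = det (mat_delete A 0 0) * det (mat_delete ?L 0 0)"
    using nz by (simp add: mult.assoc)
  thus ?thesis using True by (simp add: algebra_simps)
qed


section \<open>Hankel determinants\<close>

definition hankel :: "(int \<Rightarrow> 'a) \<Rightarrow> nat \<Rightarrow> int \<Rightarrow> 'a mat" where
  "hankel u k n = mat k k (\<lambda>(i,j). u (n + int i + int j))"

lemma hankel_carrier[simp]: "hankel u k n \<in> carrier_mat k k" by (simp add: hankel_def)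

text \<open>Condensation for Hankel determinants: all five minors occurring in the Desnanot-Jacobi
  identity of a Hankel matrix are again Hankel matrices.\<close>
lemma hankel_condensation:
  fixes u :: "int \<Rightarrow> 'a::field"
  assumes nz: "det (hankel u (Suc k) (n+2)) \<noteq> 0"
  shows "det (hankel u (Suc (Suc k)) n) * det (hankel u k (n+2))
       = det (hankel u (Suc k) (n+2)) * det (hankel u (Suc k) n) - det (hankel u (Suc k) (n+1)) ^ 2"
proof -
  let ?A = "hankel u (Suc (Suc k)) n"
  have "mat_delete ?A 0 0 = hankel u (Suc k) (n+2)"
    "mat_delete ?A (Suc k) (Suc k) = hankel u (Suc k) n"
    "mat_delete ?A 0 (Suc k) = hankel u (Suc k) (n+1)"
    "mat_delete ?A (Suc k) 0 = hankel u (Suc k) (n+1)"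
    "mat_delete (hankel u (Suc k) n) 0 0 = hankel u k (n+2)"
    by (rule eq_matI; auto simp: hankel_def mat_delete_def algebra_simps)+
  thus ?thesis using desnanot_jacobi[of ?A k] nz by (simp add: power2_eq_square)
qed

definition lin_relation :: "nat \<Rightarrow> (nat \<Rightarrow> 'a::comm_ring_1) \<Rightarrow> (int \<Rightarrow> 'a) \<Rightarrow> int \<Rightarrow> bool" where
  "lin_relation r b u m \<longleftrightarrow> (\<forall>i\<le>r. (\<Sum>k\<in>{0..r+1}. (-1)^k * b k * u (m + int i - int k)) = 0)"

text \<open>If the Hankel matrix of the window is invertible, a linear relation is determined by its
  leading coefficient: the difference of two relations is a kernel vector of that matrix.\<close>
lemma lin_relation_unique:
  fixes u :: "int \<Rightarrow> 'a::field"
  assumes H: "det (hankel u (r+1) (m - int r - 1)) \<noteq> 0"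
    and b: "lin_relation r b u m" and b': "lin_relation r b' u m"
    and b0: "b 0 = b' 0" and k: "k \<le> r + 1"
  shows "b k = b' k"
proof -
  let ?H = "hankel u (r+1) (m - int r - 1)"
  define v where "v = vec (r+1) (\<lambda>j. (-1)^(r+1-j) * (b (r+1-j) - b' (r+1-j)))"
  have v: "v \<in> carrier_vec (r+1)" by (simp add: v_def)
  have "?H *\<^sub>v v = 0\<^sub>v (r+1)"
  proof (rule eq_vecI)
    fix i assume "i < dim_vec (0\<^sub>v (r+1) :: 'a vec)"
    hence i: "i \<le> r" by simp
    have "(?H *\<^sub>v v) $ i = (\<Sum>j\<in>{0..<r+1}. u (m - int r - 1 + int i + int j) * ((-1)^(r+1-j) * (b (r+1-j) - b' (r+1-j))))"
      using i by (simp add: scalar_prod_def hankel_def v_def)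
    also have "\<dots> = (\<Sum>k\<in>{1..r+1}. (-1)^k * (b k - b' k) * u (m + int i - int k))"
    proof (rule sum.reindex_bij_witness[of _ "\<lambda>k. r+1-k" "\<lambda>j. r+1-j"])
      fix a assume "a \<in> {0..<r+1}"
      hence shift: "m + int i - int (r + 1 - a) = m - int r - 1 + int i + int a" by auto
      show "(-1) ^ (r + 1 - a) * (b (r + 1 - a) - b' (r + 1 - a)) * u (m + int i - int (r + 1 - a))
         = u (m - int r - 1 + int i + int a) * ((-1)^(r+1-a) * (b (r+1-a) - b' (r+1-a)))"
        unfolding shift by simp
    qed auto
    also have "\<dots> = (\<Sum>k\<in>{0..r+1}. (-1)^k * (b k - b' k) * u (m + int i - int k))"
      by (subst (2) sum.atLeast_Suc_atMost) (auto simp: b0)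
    also have "\<dots> = 0"
      using b b' i by (simp add: lin_relation_def algebra_simps sum_subtractf)
    finally show "(?H *\<^sub>v v) $ i = 0\<^sub>v (r+1) $ i" using i by simp
  qed (auto simp: hankel_def)
  hence "v = 0\<^sub>v (r+1)"
    using det_0_iff_vec_prod_zero_field[of ?H "r+1"] v H by auto
  thus ?thesis
    using k b0 by (cases "k = 0") (auto simp: v_def dest!: arg_cong[where f = "\<lambda>x. x $ (r+1-k)"])
qed


section \<open>Hankel determinants of a Q-system and the conserved quantities\<close>

locale Q_system =
  fixes r :: nat and R :: "nat \<Rightarrow> int \<Rightarrow> 'a::field"
  assumes Q: "is_Q_system r R"
begin

lemma R_0[simp]: "R 0 n = 1" and R_top[simp]: "R (Suc r) n = 1"
  using Q by (simp_all add: is_Q_system_def)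

lemma R_nonzero: "a \<le> Suc r \<Longrightarrow> R a n \<noteq> 0"
  using Q by (cases "a = 0"; cases "a = Suc r") (auto simp: is_Q_system_def)

lemma Q_relation:
  "1 \<le> a \<Longrightarrow> a \<le> r \<Longrightarrow> R a (n + 1) * R a (n - 1) = (R a n)\<^sup>2 + R (a + 1) n * R (a - 1) n"
  using Q by (simp add: is_Q_system_def)

text \<open>One step of the induction below: condensation turns the Q-system relation for R (a+1)
  into the formula for R (a+2).\<close>
lemma hankel_R_step:
  assumes a: "Suc a \<le> r"
    and IH0: "\<And>n. det (hankel (R 1) a (n - int a + 1)) = R a n"
    and IH1: "\<And>n. det (hankel (R 1) (Suc a) (n - int (Suc a) + 1)) = R (Suc a) n"
  shows "det (hankel (R 1) (Suc (Suc a)) (n - int (Suc (Suc a)) + 1)) = R (Suc (Suc a)) n"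
proof -
  define m where "m = n - int (Suc (Suc a)) + 1"
  have h: "det (hankel (R 1) a (m+2)) = R a n" "det (hankel (R 1) (Suc a) (m+2)) = R (Suc a) (n+1)"
    "det (hankel (R 1) (Suc a) m) = R (Suc a) (n-1)" "det (hankel (R 1) (Suc a) (m+1)) = R (Suc a) n"
    using IH0[of n] IH1[of "n+1"] IH1[of "n-1"] IH1[of n] by (simp_all add: m_def algebra_simps)
  have "det (hankel (R 1) (Suc (Suc a)) m) * R a n = R (Suc a) (n+1) * R (Suc a) (n-1) - R (Suc a) n ^ 2"
    using hankel_condensation[of "R 1" a m] R_nonzero[of "Suc a" "n+1"] a unfolding h by simp
  also have "\<dots> = R (Suc (Suc a)) n * R a n"
    using Q_relation[of "Suc a" n] a by simp
  finally show ?thesis using R_nonzero[of a n] a unfolding m_def by simp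
qed

lemma hankel_R:
  assumes "a \<le> r + 1"
  shows "det (hankel (R 1) a (n - int a + 1)) = R a n"
proof -
  have "(\<forall>n. det (hankel (R 1) a (n - int a + 1)) = R a n)
      \<and> (\<forall>n. det (hankel (R 1) (Suc a) (n - int (Suc a) + 1)) = R (Suc a) n)"
    if "a \<le> r" for a
    using that
  proof (induction a)
    case 0
    show ?case by (auto simp: hankel_def det_single)
  next
    case (Suc a)
    thus ?case using hankel_R_step[of a] by simp
  qed
  thus ?thesis using assms by (cases a) auto
qed

lemma hankel_R_top: "det (hankel (R 1) (r+1) (m - int r - 1)) = 1"
  using hankel_R[of "r+1" "m-1"] by simp

definition cons_matrix :: "int \<Rightarrow> 'a mat" where
  "cons_matrix m = mat (r + 2) (r + 2) (\<lambda>(i, j). R 1 (m + (int i + 1) + (int j + 1) - int r - 3))"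

lemma cons_qty_minor: "cons_qty r R k m = det (mat_delete (cons_matrix m) (r+1) (r + 1 - k))"
  by (simp add: cons_qty_def cons_matrix_def)

lemma cons_qty_0: "cons_qty r R 0 m = 1"
proof -
  have "mat_delete (cons_matrix m) (r+1) (r+1) = hankel (R 1) (r+1) (m - int r - 1)"
    by (rule eq_matI) (auto simp: cons_matrix_def hankel_def mat_delete_def algebra_simps)
  thus ?thesis using hankel_R_top[of m] by (simp add: cons_qty_minor)
qed

text \<open>The sign of the entry in the last row and column r+1-k of an (r+2) x (r+2) matrix.\<close>
lemma neg1_pow_reflect: "k \<le> a \<Longrightarrow> (-1::'b::comm_ring_1)^(a + (a - k)) = (-1)^k"
proof -
  assume "k \<le> a"
  then obtain d where "a = k + d" using le_Suc_ex by blast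
  hence "a + (a - k) = k + 2 * d" by simp
  thus ?thesis by (simp add: power_add power_mult)
qed

text \<open>The conserved quantities form a linear relation for R 1: replacing the last row of
  cons_matrix m by its row i gives a singular matrix, whose Laplace expansion along the last
  row is the relation.\<close>
lemma cons_qty_relation: "lin_relation r (\<lambda>k. cons_qty r R k m) (R 1) m"
  unfolding lin_relation_def
proof (intro allI impI)
  fix i assume i: "i \<le> r"
  let ?B = "cons_matrix m"
  define N where "N = mat (r+2) (r+2) (\<lambda>(a,b). if a = r+1 then ?B $$ (i,b) else ?B $$ (a,b))"
  have N: "N \<in> carrier_mat (r+2) (r+2)" by (simp add: N_def)
  have entry: "N $$ (r+1,b) * cofactor N (r+1) b
      = (-1)^(r+1+b) * R 1 (m + int i + int b - int r - 1) * det (mat_delete ?B (r+1) b)"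
    if "b \<in> {0..r+1}" for b
  proof -
    have "mat_delete N (r+1) b = mat_delete ?B (r+1) b"
      by (rule eq_matI) (auto simp: N_def cons_matrix_def mat_delete_def)
    moreover have "N $$ (r+1,b) = R 1 (m + int i + int b - int r - 1)"
      using that i by (simp add: N_def cons_matrix_def algebra_simps)
    ultimately show ?thesis by (simp add: cofactor_def)
  qed
  have "0 = det N"
    by (rule det_identical_rows[OF N, of i "r+1", symmetric]) (use i in \<open>auto simp: N_def cons_matrix_def\<close>)
  also have "\<dots> = (\<Sum>b\<in>{0..r+1}. N $$ (r+1,b) * cofactor N (r+1) b)"
    using laplace_expansion_row[OF N, of "r+1"] by (simp add: atLeast0AtMost lessThan_Suc_atMost)
  also have "\<dots> = (\<Sum>b\<in>{0..r+1}. (-1)^(r+1+b) * R 1 (m + int i + int b - int r - 1) * det (mat_delete ?B (r+1) b))"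
    using entry by (rule sum.cong[OF refl])
  also have "\<dots> = (\<Sum>k\<in>{0..r+1}. (-1)^(r+1+(r+1-k)) * R 1 (m + int i + int (r+1-k) - int r - 1)
                      * det (mat_delete ?B (r+1) (r+1-k)))"
    by (subst sum.atLeastAtMost_rev) simp
  also have "\<dots> = (\<Sum>k\<in>{0..r+1}. (-1)^k * cons_qty r R k m * R 1 (m + int i - int k))"
  proof (rule sum.cong[OF refl])
    fix k assume k: "k \<in> {0..r+1}"
    hence "(-1::'a)^(r+1+(r+1-k)) = (-1)^k" by (intro neg1_pow_reflect) simp
    moreover have "m + int i + int (r+1-k) - int r - 1 = m + int i - int k" using k by auto
    ultimately
    show "(-1)^(r+1+(r+1-k)) * R 1 (m + int i + int (r+1-k) - int r - 1) * det (mat_delete ?B (r+1) (r+1-k))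
         = (-1)^k * cons_qty r R k m * R 1 (m + int i - int k)"
      by (simp add: cons_qty_minor algebra_simps)
  qed
  finally show "(\<Sum>k\<in>{0..r+1}. (-1)^k * cons_qty r R k m * R 1 (m + int i - int k)) = 0" by simp
qed

end


section \<open>A Lax matrix and its characteristic recurrence\<close>

text \<open>Coefficient sequences of polynomials; multiplication by the variable.\<close>
definition coeff_shift :: "(nat \<Rightarrow> 'a::zero) \<Rightarrow> nat \<Rightarrow> 'a" where
  "coeff_shift q l = (if l = 0 then 0 else q (l - 1))"

text \<open>Coefficients of the polynomials p_0 = 0, p_1 = 1, p_(k+2) = (x - d k) p_(k+1) - e k p_k,
  the characteristic polynomials of the leading principal submatrices of a Jacobi matrix.\<close>
fun jacobi_coeff :: "(nat \<Rightarrow> 'a::comm_ring_1) \<Rightarrow> (nat \<Rightarrow> 'a) \<Rightarrow> nat \<Rightarrow> nat \<Rightarrow> 'a" where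
  "jacobi_coeff d e 0 l = 0"
| "jacobi_coeff d e (Suc 0) l = (if l = 0 then 1 else 0)"
| "jacobi_coeff d e (Suc (Suc k)) l = coeff_shift (jacobi_coeff d e (Suc k)) l
     - d k * jacobi_coeff d e (Suc k) l - e k * coeff_shift (jacobi_coeff d e k) l"

lemma jacobi_coeff_degree: "k \<le> l \<Longrightarrow> jacobi_coeff d e k l = 0"
  by (induction d e k l rule: jacobi_coeff.induct) (auto simp: coeff_shift_def)

lemma pow_mat_add:
  assumes "A \<in> carrier_mat n n"
  shows "A ^\<^sub>m (l + s) = A ^\<^sub>m l * A ^\<^sub>m s"
proof (induction s)
  case 0 show ?case using assms by simp
next
  case (Suc s)
  have "A ^\<^sub>m (l + Suc s) = (A ^\<^sub>m l * A ^\<^sub>m s) * A" using Suc by simp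
  also have "\<dots> = A ^\<^sub>m l * (A ^\<^sub>m s * A)"
    by (rule assoc_mult_mat[OF pow_carrier_mat[OF assms] pow_carrier_mat[OF assms] assms])
  finally show ?case by simp
qed

lemma sum_if_Suc_eq: "(\<Sum>k\<in>{0..<M}. if Suc k = i then g k else 0) = (if 0 < i \<and> i \<le> M then g (i - 1) else 0)"
  by (cases i) (auto simp: sum.delta)

text \<open>A discrete zero curvature condition for an upper bidiagonal matrix with diagonal d n and
  unit superdiagonal, and a unipotent lower bidiagonal matrix with subdiagonal - e n.  It states
  that the two factorizations of the Lax matrix below are compatible.\<close>
locale lax_pair =
  fixes r :: nat and d e :: "int \<Rightarrow> nat \<Rightarrow> 'a::field"
  assumes e_0[simp]: "e n 0 = 0" and e_beyond: "r < i \<Longrightarrow> e n i = 0"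
    and zero_curvature_sub: "1 \<le> i \<Longrightarrow> i \<le> r \<Longrightarrow> e (n+1) i * d n (i-1) = d (n+1) i * e n i"
    and zero_curvature_diag: "i \<le> r \<Longrightarrow> d n i - e (n+1) i = d (n+1) i - e n (Suc i)"
begin

text \<open>lower n is the inverse of the unipotent bidiagonal matrix lower_inv n; the Lax matrix is
  lax n = lower n * upper n.\<close>
definition lower_inv :: "int \<Rightarrow> 'a mat" where
  "lower_inv n = mat (Suc r) (Suc r) (\<lambda>(i,j). if i = j then 1 else if i = Suc j then - e n i else 0)"
definition lower :: "int \<Rightarrow> 'a mat" where
  "lower n = mat (Suc r) (Suc r) (\<lambda>(i,j). if j \<le> i then (\<Prod>l\<in>{Suc j..i}. e n l) else 0)"
definition upper :: "int \<Rightarrow> 'a mat" where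
  "upper n = mat (Suc r) (Suc r) (\<lambda>(i,j). if i = j then d n i else if j = Suc i then 1 else 0)"
definition lax :: "int \<Rightarrow> 'a mat" where
  "lax n = lower n * upper n"

lemma carriers[simp]: "lower_inv n \<in> carrier_mat (Suc r) (Suc r)" "lower n \<in> carrier_mat (Suc r) (Suc r)"
  "upper n \<in> carrier_mat (Suc r) (Suc r)" "lax n \<in> carrier_mat (Suc r) (Suc r)"
  by (simp_all add: lower_inv_def lower_def upper_def lax_def mult_carrier_mat[of _ "Suc r" "Suc r"])

lemma mult_square_carrier[simp]:
  "A \<in> carrier_mat (Suc r) (Suc r) \<Longrightarrow> B \<in> carrier_mat (Suc r) (Suc r) \<Longrightarrow> A * B \<in> carrier_mat (Suc r) (Suc r)"
  by (rule mult_carrier_mat)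

lemma mult_assoc_square:
  "A \<in> carrier_mat (Suc r) (Suc r) \<Longrightarrow> B \<in> carrier_mat (Suc r) (Suc r) \<Longrightarrow> C \<in> carrier_mat (Suc r) (Suc r)
   \<Longrightarrow> A * B * C = A * (B * (C :: 'a mat))"
  by (rule assoc_mult_mat)

lemma dims[simp]: "dim_row (lower n) = Suc r" "dim_col (lower n) = Suc r"
  "dim_row (upper n) = Suc r" "dim_col (upper n) = Suc r"
  "dim_row (lower_inv n) = Suc r" "dim_col (lower_inv n) = Suc r"
  "dim_row (lax n) = Suc r" "dim_col (lax n) = Suc r"
  by (simp_all add: lower_def upper_def lower_inv_def lax_def)

lemma lower_inv_mult_entry:
  assumes M: "M \<in> carrier_mat (Suc r) (Suc r)" and i: "i < Suc r" and j: "j < Suc r"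
  shows "(lower_inv n * M) $$ (i,j) = M $$ (i,j) - (if 0 < i then e n i * M $$ (i-1,j) else 0)"
proof -
  have "(lower_inv n * M) $$ (i,j) = (\<Sum>k\<in>{0..<Suc r}. lower_inv n $$ (i,k) * M $$ (k,j))"
    using M i j by (simp add: scalar_prod_def)
  also have "\<dots> = (\<Sum>k\<in>{0..<Suc r}. (if k = i then M $$ (i,j) else 0) + (if Suc k = i then - e n i * M $$ (k,j) else 0))"
    by (rule sum.cong) (use i in \<open>auto simp: lower_inv_def\<close>)
  also have "\<dots> = M $$ (i,j) - (if 0 < i then e n i * M $$ (i-1,j) else 0)"
    using i by (simp add: sum.distrib sum_if_Suc_eq)
  finally show ?thesis .
qed

lemma mult_upper_entry:
  assumes M: "M \<in> carrier_mat (Suc r) (Suc r)" and i: "i < Suc r" and j: "j < Suc r"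
  shows "(M * upper n) $$ (i,j) = M $$ (i,j) * d n j + (if 0 < j then M $$ (i,j-1) else 0)"
proof -
  have "(M * upper n) $$ (i,j) = (\<Sum>k\<in>{0..<Suc r}. M $$ (i,k) * upper n $$ (k,j))"
    using M i j by (simp add: scalar_prod_def)
  also have "\<dots> = (\<Sum>k\<in>{0..<Suc r}. (if k = j then M $$ (i,j) * d n j else 0) + (if Suc k = j then M $$ (i,k) else 0))"
    by (rule sum.cong) (use j in \<open>auto simp: upper_def\<close>)
  also have "\<dots> = M $$ (i,j) * d n j + (if 0 < j then M $$ (i,j-1) else 0)"
    using j by (simp add: sum.distrib sum_if_Suc_eq)
  finally show ?thesis .
qed

lemma upper_mult_entry:
  assumes M: "M \<in> carrier_mat (Suc r) (Suc r)" and i: "i < Suc r" and j: "j < Suc r"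
  shows "(upper n * M) $$ (i,j) = d n i * M $$ (i,j) + (if Suc i < Suc r then M $$ (Suc i,j) else 0)"
proof -
  have "(upper n * M) $$ (i,j) = (\<Sum>k\<in>{0..<Suc r}. upper n $$ (i,k) * M $$ (k,j))"
    using M i j by (simp add: scalar_prod_def)
  also have "\<dots> = (\<Sum>k\<in>{0..<Suc r}. (if k = i then d n i * M $$ (i,j) else 0) + (if k = Suc i then M $$ (k,j) else 0))"
    by (rule sum.cong) (use i in \<open>auto simp: upper_def\<close>)
  also have "\<dots> = d n i * M $$ (i,j) + (if Suc i < Suc r then M $$ (Suc i,j) else 0)"
    using i by (simp add: sum.distrib)
  finally show ?thesis .
qed

text \<open>The first row of lower n is the first unit vector.\<close>
lemma lower_first_row:
  assumes M: "M \<in> carrier_mat (Suc r) (Suc r)" and j: "j < Suc r"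
  shows "(lower n * M) $$ (0,j) = M $$ (0,j)"
proof -
  have "(lower n * M) $$ (0,j) = (\<Sum>k\<in>{0..<Suc r}. lower n $$ (0,k) * M $$ (k,j))"
    using M j by (simp add: scalar_prod_def)
  also have "\<dots> = (\<Sum>k\<in>{0..<Suc r}. if k = 0 then M $$ (0,j) else 0)"
    by (rule sum.cong) (auto simp: lower_def)
  finally show ?thesis by simp
qed

lemma lower_inv_lower: "lower_inv n * lower n = 1\<^sub>m (Suc r)"
proof (rule eq_matI)
  fix i j assume "i < dim_row (1\<^sub>m (Suc r) :: 'a mat)" "j < dim_col (1\<^sub>m (Suc r) :: 'a mat)"
  hence i: "i < Suc r" and j: "j < Suc r" by auto
  show "(lower_inv n * lower n) $$ (i,j) = 1\<^sub>m (Suc r) $$ (i,j)"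
    unfolding lower_inv_mult_entry[OF carriers(2) i j] using i j
    by (cases i) (auto simp: lower_def prod.atLeast_Suc_atMost_Suc_shift[symmetric] prod.atLeast_Suc_atMost)
qed auto

lemma lower_lower_inv: "lower n * lower_inv n = 1\<^sub>m (Suc r)"
  by (rule mat_mult_left_right_inverse[OF carriers(1,2) lower_inv_lower])

text \<open>The zero curvature condition in matrix form.\<close>
lemma lower_inv_upper_shift: "lower_inv (n+1) * upper n = upper (n+1) * lower_inv n"
proof (rule eq_matI)
  fix i j assume "i < dim_row (upper (n+1) * lower_inv n)" "j < dim_col (upper (n+1) * lower_inv n)"
  hence i: "i < Suc r" and j: "j < Suc r" by auto
  have diag: "d n i - e (n+1) i = d (n+1) i - e n (Suc i)" using zero_curvature_diag i by simp
  have last: "\<not> Suc i < Suc r \<Longrightarrow> e n (Suc i) = 0" by (simp add: e_beyond)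
  note entries = lower_inv_mult_entry[of "upper n" i j "n+1", OF carriers(3) i j]
    upper_mult_entry[of "lower_inv n" i j "n+1", OF carriers(1) i j]
  consider "j = i" | "Suc j = i" | "j = Suc i" | "j \<noteq> i" "Suc j \<noteq> i" "j \<noteq> Suc i" by blast
  thus "(lower_inv (n+1) * upper n) $$ (i,j) = (upper (n+1) * lower_inv n) $$ (i,j)"
  proof cases
    case 1
    thus ?thesis unfolding entries using i diag last
      by (cases "Suc i < Suc r") (auto simp: upper_def lower_inv_def algebra_simps)
  next
    case 2
    thus ?thesis unfolding entries using i zero_curvature_sub[of i n] by (auto simp: upper_def lower_inv_def)
  qed (unfold entries, use i j in \<open>auto simp: upper_def lower_inv_def\<close>)
qed auto

lemma upper_lower: "upper n * lower n = lax (n+1)"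
proof -
  have "upper n * lower n = (lower (n+1) * lower_inv (n+1)) * (upper n * lower n)"
    unfolding lower_lower_inv by simp
  also have "\<dots> = lower (n+1) * ((lower_inv (n+1) * upper n) * lower n)"
    by (simp add: mult_assoc_square)
  also have "\<dots> = lower (n+1) * (upper (n+1) * (lower_inv n * lower n))"
    unfolding lower_inv_upper_shift by (simp add: mult_assoc_square)
  finally show ?thesis unfolding lower_inv_lower lax_def by simp
qed

lemma lax_pow_Suc: "lax n ^\<^sub>m (Suc s) = lower n * (lax (n+1) ^\<^sub>m s) * upper n"
proof (induction s)
  case 0 show ?case by (simp add: lax_def)
next
  case (Suc s)
  let ?P = "lax (n+1) ^\<^sub>m s"
  have "lax n ^\<^sub>m Suc (Suc s) = (lower n * ?P * upper n) * (lower n * upper n)"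
    using Suc by (simp add: lax_def)
  also have "\<dots> = lower n * (?P * (upper n * lower n)) * upper n"
    by (simp add: mult_assoc_square)
  finally show ?case unfolding upper_lower by simp
qed

lemma lax_pow_corner: "(lax n ^\<^sub>m s) $$ (0,0) = (\<Prod>i<s. d (n + int i) 0)"
proof (induction s arbitrary: n)
  case 0 show ?case by simp
next
  case (Suc s)
  have "(lax n ^\<^sub>m Suc s) $$ (0,0) = (lower n * lax (n+1) ^\<^sub>m s) $$ (0,0) * d n 0"
    unfolding lax_pow_Suc by (subst mult_upper_entry) auto
  also have "\<dots> = (lax (n+1) ^\<^sub>m s) $$ (0,0) * d n 0" by (subst lower_first_row) auto
  finally show ?case unfolding Suc prod.lessThan_Suc_shift by (simp add: algebra_simps)
qed

text \<open>Since lower_inv n * lax n = upper n, each row of lax n is obtained from the previous one.\<close>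
lemma lax_row_recurrence:
  assumes k: "k < Suc r" and j: "j < Suc r"
  shows "lax n $$ (k,j) - (if 0 < k then e n k * lax n $$ (k-1,j) else 0) = upper n $$ (k,j)"
proof -
  have "lower_inv n * lax n = upper n"
    unfolding lax_def by (simp add: mult_assoc_square[symmetric] lower_inv_lower)
  hence "(lower_inv n * lax n) $$ (k,j) = upper n $$ (k,j)" by simp
  thus ?thesis unfolding lower_inv_mult_entry[OF carriers(4) k j] .
qed

text \<open>The first row of q(lax n), for a coefficient sequence q of degree at most r+1.\<close>
definition row0_eval :: "int \<Rightarrow> (nat \<Rightarrow> 'a) \<Rightarrow> nat \<Rightarrow> 'a" where
  "row0_eval n q j = (\<Sum>l\<in>{0..Suc r}. q l * (lax n ^\<^sub>m l) $$ (0,j))"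

lemma row0_eval_shift:
  assumes q: "q (Suc r) = 0" and j: "j < Suc r"
  shows "row0_eval n (coeff_shift q) j = (\<Sum>i\<in>{0..<Suc r}. row0_eval n q i * lax n $$ (i,j))"
proof -
  let ?T = "lax n"
  have "row0_eval n (coeff_shift q) j = (\<Sum>l\<in>{Suc 0..Suc r}. q (l - 1) * (?T ^\<^sub>m l) $$ (0,j))"
    unfolding row0_eval_def coeff_shift_def by (subst sum.atLeast_Suc_atMost) auto
  also have "\<dots> = (\<Sum>l\<in>{0..r}. q l * (?T ^\<^sub>m Suc l) $$ (0,j))"
    by (subst sum.shift_bounds_cl_Suc_ivl) simp
  also have "\<dots> = (\<Sum>l\<in>{0..Suc r}. q l * (?T ^\<^sub>m Suc l) $$ (0,j))"
    using q by simp
  also have "\<dots> = (\<Sum>l\<in>{0..Suc r}. \<Sum>i\<in>{0..<Suc r}. q l * ((?T ^\<^sub>m l) $$ (0,i) * ?T $$ (i,j)))"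
  proof (rule sum.cong[OF refl])
    fix l
    have "(?T ^\<^sub>m Suc l) $$ (0,j) = (\<Sum>i\<in>{0..<Suc r}. (?T ^\<^sub>m l) $$ (0,i) * ?T $$ (i,j))"
      using j by (simp add: scalar_prod_def)
    thus "q l * (?T ^\<^sub>m Suc l) $$ (0,j) = (\<Sum>i\<in>{0..<Suc r}. q l * ((?T ^\<^sub>m l) $$ (0,i) * ?T $$ (i,j)))"
      by (simp only: sum_distrib_left)
  qed
  also have "\<dots> = (\<Sum>i\<in>{0..<Suc r}. row0_eval n q i * ?T $$ (i,j))"
    unfolding row0_eval_def sum_distrib_right by (subst sum.swap) (simp add: mult.assoc)
  finally show ?thesis .
qed

lemma row0_eval_shift_unit:
  assumes q: "q (Suc r) = 0" and unit: "\<And>i. i < Suc r \<Longrightarrow> row0_eval n q i = (if Suc i = k then 1 else 0)"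
    and k: "k \<le> Suc r" and j: "j < Suc r"
  shows "row0_eval n (coeff_shift q) j = (if 0 < k then lax n $$ (k-1,j) else 0)"
proof -
  have "row0_eval n (coeff_shift q) j = (\<Sum>i\<in>{0..<Suc r}. if Suc i = k then lax n $$ (i,j) else 0)"
    unfolding row0_eval_shift[of q, OF q j] by (rule sum.cong) (auto simp: unit)
  also have "\<dots> = (if 0 < k \<and> k \<le> Suc r then lax n $$ (k - 1, j) else 0)"
    by (rule sum_if_Suc_eq)
  finally show ?thesis using k by simp
qed

text \<open>The induction step: the three-term recurrence of the Jacobi polynomials matches the row
  recurrence of lax n.\<close>
lemma row0_eval_jacobi_step:
  assumes k: "k \<le> r" and j: "j < Suc r"
    and IH1: "\<And>i. i < Suc r \<Longrightarrow> row0_eval n (jacobi_coeff (d n) (e n) (Suc k)) i = (if i = k then 1 else 0)"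
    and IH0: "\<And>i. i < Suc r \<Longrightarrow> row0_eval n (jacobi_coeff (d n) (e n) k) i = (if Suc i = k then 1 else 0)"
  shows "row0_eval n (jacobi_coeff (d n) (e n) (Suc (Suc k))) j = (if j = Suc k then 1 else 0)"
proof -
  let ?q1 = "jacobi_coeff (d n) (e n) (Suc k)" and ?q0 = "jacobi_coeff (d n) (e n) k"
  have shift1: "row0_eval n (coeff_shift ?q1) j = lax n $$ (k,j)"
    using row0_eval_shift_unit[of ?q1 n "Suc k"] IH1 k j by (simp add: jacobi_coeff_degree)
  have shift0: "row0_eval n (coeff_shift ?q0) j = (if 0 < k then lax n $$ (k-1,j) else 0)"
    using row0_eval_shift_unit[of ?q0 n k] IH0 k j by (simp add: jacobi_coeff_degree)
  have "row0_eval n (jacobi_coeff (d n) (e n) (Suc (Suc k))) j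
      = row0_eval n (coeff_shift ?q1) j - d n k * row0_eval n ?q1 j - e n k * row0_eval n (coeff_shift ?q0) j"
    unfolding row0_eval_def jacobi_coeff.simps(3) left_diff_distrib sum_subtractf sum_distrib_left
    by (simp only: mult.assoc)
  also have "\<dots> = lax n $$ (k,j) - (if 0 < k then e n k * lax n $$ (k-1,j) else 0) - d n k * (if j = k then 1 else 0)"
    unfolding shift1 shift0 IH1[OF j] using k by simp
  also have "\<dots> = (if j = Suc k then 1 else 0)"
    unfolding lax_row_recurrence[OF le_imp_less_Suc[OF k] j] using k j by (auto simp: upper_def)
  finally show ?thesis .
qed

text \<open>Cayley-Hamilton for the first row: the k-th Jacobi polynomial of lax n sends the first
  unit row vector to the k-th one.\<close>
lemma row0_eval_jacobi:
  "k \<le> Suc (Suc r) \<Longrightarrow> j < Suc r \<Longrightarrow> row0_eval n (jacobi_coeff (d n) (e n) k) j = (if Suc j = k then 1 else 0)"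
proof (induction k arbitrary: j rule: less_induct)
  case (less k)
  consider "k = 0" | "k = Suc 0" | k' where "k = Suc (Suc k')" by (metis not0_implies_Suc)
  thus ?case
  proof cases
    case 1 thus ?thesis by (simp add: row0_eval_def)
  next
    case 2 thus ?thesis using less.prems by (simp add: row0_eval_def sum.atLeast_Suc_atMost)
  next
    case (3 k')
    have "row0_eval n (jacobi_coeff (d n) (e n) (Suc (Suc k'))) j = (if j = Suc k' then 1 else 0)"
      by (rule row0_eval_jacobi_step) (use less 3 in auto)
    thus ?thesis unfolding 3 nat.inject .
  qed
qed

text \<open>Consequently the (r+2)-nd Jacobi polynomial gives a linear recurrence for the corner
  entries of the powers of lax n.\<close>
lemma jacobi_recurrence:
  "(\<Sum>l\<in>{0..Suc r}. jacobi_coeff (d n) (e n) (Suc (Suc r)) l * (\<Prod>i<l+s. d (n + int i) 0)) = 0"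
proof -
  let ?q = "jacobi_coeff (d n) (e n) (Suc (Suc r))" and ?T = "lax n"
  have corner: "(\<Prod>i<l+s. d (n + int i) 0) = (\<Sum>i\<in>{0..<Suc r}. (?T ^\<^sub>m l) $$ (0,i) * (?T ^\<^sub>m s) $$ (i,0))"
    for l unfolding lax_pow_corner[symmetric] pow_mat_add[OF carriers(4)] by (simp add: scalar_prod_def)
  have "(\<Sum>l\<in>{0..Suc r}. ?q l * (\<Prod>i<l+s. d (n + int i) 0))
      = (\<Sum>l\<in>{0..Suc r}. \<Sum>i\<in>{0..<Suc r}. ?q l * (?T ^\<^sub>m l) $$ (0,i) * (?T ^\<^sub>m s) $$ (i,0))"
    unfolding corner by (simp only: sum_distrib_left mult.assoc)
  also have "\<dots> = (\<Sum>i\<in>{0..<Suc r}. row0_eval n ?q i * (?T ^\<^sub>m s) $$ (i,0))"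
    unfolding row0_eval_def sum_distrib_right by (rule sum.swap)
  also have "\<dots> = 0" by (rule sum.neutral) (simp add: row0_eval_jacobi)
  finally show ?thesis .
qed

end


section \<open>Hard particle partition functions of the initial segments of G_r\<close>

definition prefix_configs :: "nat \<Rightarrow> nat \<Rightarrow> nat \<Rightarrow> nat set set" where
  "prefix_configs r k j = {C. hard_particle_config {1..<2*k} (G_edges r) C \<and> card C = j}"

definition prefix_pf :: "nat \<Rightarrow> (nat \<Rightarrow> 'a::comm_ring_1) \<Rightarrow> nat \<Rightarrow> nat \<Rightarrow> 'a" where
  "prefix_pf r w k j = (\<Sum>C\<in>prefix_configs r k j. \<Prod>i\<in>C. w i)"

lemma Z_hp_prefix_pf: "Z_hp (G_vertices r) (G_edges r) j w = prefix_pf r w (Suc r) j"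
proof -
  have "G_vertices r = {1..<2 * Suc r}" by (auto simp: G_vertices_def)
  thus ?thesis by (simp add: Z_hp_def prefix_pf_def prefix_configs_def)
qed

lemma G_edge_shape:
  assumes "e \<in> G_edges r"
  obtains x y where "e = {x,y}" "x < y" "y \<le> x + 2" "y = x + 2 \<Longrightarrow> even x"
  using assms unfolding G_edges_def
proof (elim UnE)
  assume "e \<in> {{1, 2}}" thus thesis using that[of 1 2] by auto
next
  assume "e \<in> {{2 * k, 2 * k + 1} | k. 1 \<le> k \<and> k \<le> r}"
  then obtain k where "e = {2*k, 2*k+1}" by auto
  thus thesis using that[of "2*k" "2*k+1"] by auto
next
  assume "e \<in> {{2 * k - 2, 2 * k} | k. 2 \<le> k \<and> k \<le> r}"
  then obtain k where "e = {2*k-2, 2*k}" "2 \<le> k" by auto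
  thus thesis using that[of "2*k-2" "2*k"] by auto
next
  assume "e \<in> {{2 * k - 1, 2 * k} | k. 2 \<le> k \<and> k \<le> r}"
  then obtain k where "e = {2*k-1, 2*k}" "2 \<le> k" by auto
  thus thesis using that[of "2*k-1" "2*k"] by auto
qed

lemma G_edges_at_top:
  assumes "1 \<le> k" "k \<le> r"
  shows "{2*k, 2*k+1} \<in> G_edges r" "{2*k-1, 2*k} \<in> G_edges r"
    and "2 \<le> k \<Longrightarrow> {2*k-2, 2*k} \<in> G_edges r"
  using assms by (auto simp: G_edges_def)

lemma hard_particle_config_subset:
  "hard_particle_config V E C \<Longrightarrow> D \<subseteq> C \<Longrightarrow> D \<subseteq> W \<Longrightarrow> hard_particle_config W E D"
  unfolding hard_particle_config_def by (meson subset_trans)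

lemma hard_particle_insert:
  assumes C: "hard_particle_config V (G_edges r) C"
    and far: "\<And>z. z \<in> C \<Longrightarrow> z + 2 < v \<or> (z + 2 = v \<and> odd z)"
    and v: "v \<in> V'" and VV: "V \<subseteq> V'"
  shows "hard_particle_config V' (G_edges r) (insert v C)"
  unfolding hard_particle_config_def
proof (intro conjI ballI notI)
  show "insert v C \<subseteq> V'" using C v VV by (auto simp: hard_particle_config_def)
next
  fix e assume e: "e \<in> G_edges r" and sub: "e \<subseteq> insert v C"
  obtain x y where xy: "e = {x,y}" "x < y" "y \<le> x + 2" "y = x + 2 \<Longrightarrow> even x"
    using G_edge_shape[OF e] by blast
  have "\<not> e \<subseteq> C" using C e by (auto simp: hard_particle_config_def)
  hence "v = x \<and> y \<in> C \<or> v = y \<and> x \<in> C" using sub xy(1,2) by auto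
  thus False using far[of x] far[of y] xy by auto
qed

lemma prefix_configs_subset: "C \<in> prefix_configs r k j \<Longrightarrow> C \<subseteq> {1..<2*k}"
  by (simp add: prefix_configs_def hard_particle_config_def)

lemma prefix_configs_finite: "finite (prefix_configs r k j)"
proof (rule finite_subset)
  show "prefix_configs r k j \<subseteq> Pow {1..<2*k}" using prefix_configs_subset by blast
qed simp

lemma prefix_configs_zero: "prefix_configs r k 0 = {{}}"
proof -
  have "\<not> e \<subseteq> {}" if "e \<in> G_edges r" for e using G_edge_shape[OF that] by blast
  moreover have "C = {}" if "C \<in> prefix_configs r k 0" for C
    using that prefix_configs_subset[OF that] finite_subset[of C "{1..<2*k}"]
    by (auto simp: prefix_configs_def)
  ultimately show ?thesis by (auto simp: prefix_configs_def hard_particle_config_def)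
qed

lemma prefix_below_two_removed:
  "C \<subseteq> {1..<Suc (Suc m)} \<Longrightarrow> Suc m \<notin> C \<Longrightarrow> m \<notin> C \<Longrightarrow> C \<subseteq> {1..<m}"
  by (auto simp: subset_iff less_Suc_eq)

text \<open>Decomposition of the configurations on 2k+1 vertices by the occupation of the new
  vertices 2k+1 and 2k: vertex 2k+1 blocks 2k, and 2k blocks 2k-1 and 2k-2.\<close>
lemma prefix_configs_decompose:
  assumes k: "1 \<le> k" "k \<le> r" and C: "C \<in> prefix_configs r (Suc k) (Suc J)"
  shows "C \<in> prefix_configs r k (Suc J) \<union> insert (2*k+1) ` prefix_configs r k J
           \<union> insert (2*k) ` prefix_configs r (k-1) J"
proof -
  have hC: "hard_particle_config {1..<2*Suc k} (G_edges r) C" and cC: "card C = Suc J"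
    using C by (auto simp: prefix_configs_def)
  have CV: "C \<subseteq> {1..<Suc (Suc (2*k))}" using hC by (simp add: hard_particle_config_def)
  have fin: "finite C" using CV finite_subset by blast
  have no_edge: "e \<in> G_edges r \<Longrightarrow> \<not> e \<subseteq> C" for e using hC by (simp add: hard_particle_config_def)
  have restrict: "C - {v} \<in> prefix_configs r k' J" if "v \<in> C" "C - {v} \<subseteq> {1..<2*k'}" for v k'
    using hard_particle_config_subset[OF hC _ that(2)] cC fin that(1) by (auto simp: prefix_configs_def)
  consider "2*k+1 \<in> C" | "2*k+1 \<notin> C" "2*k \<in> C" | "2*k+1 \<notin> C" "2*k \<notin> C" by blast
  thus ?thesis
  proof cases
    case 1
    have "2*k \<notin> C" using no_edge[OF G_edges_at_top(1)[OF k]] 1 by auto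
    hence "C - {2*k+1} \<subseteq> {1..<2*k}" using prefix_below_two_removed[of "C - {2*k+1}"] CV by auto
    hence "C - {2*k+1} \<in> prefix_configs r k J" using restrict 1 by blast
    moreover have "C = insert (2*k+1) (C - {2*k+1})" using 1 by auto
    ultimately show ?thesis by blast
  next
    case 2
    obtain k' where k': "k = Suc k'" using k by (cases k) auto
    have "Suc (2*k') \<notin> C" using no_edge[OF G_edges_at_top(2)[OF k]] 2 k' by auto
    moreover have "2*k' \<notin> C"
      using CV no_edge[OF G_edges_at_top(3)[OF k]] 2 k' by (cases "k' = 0") auto
    moreover have "C - {2*k} \<subseteq> {1..<Suc (Suc (2*k'))}"
      using prefix_below_two_removed[of "C - {2*k}" "2*k"] CV 2 k' by auto
    ultimately have "C - {2*k} \<subseteq> {1..<2*(k-1)}"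
      using prefix_below_two_removed[of "C - {2*k}" "2*k'"] k' by auto
    hence "C - {2*k} \<in> prefix_configs r (k-1) J" using restrict 2 by blast
    moreover have "C = insert (2*k) (C - {2*k})" using 2 by auto
    ultimately show ?thesis by blast
  next
    case 3
    hence small: "C \<subseteq> {1..<2*k}" using prefix_below_two_removed[of C "2*k"] CV by auto
    thus ?thesis using hard_particle_config_subset[OF hC _ small] cC by (auto simp: prefix_configs_def)
  qed
qed

lemma prefix_configs_extend:
  assumes D: "D \<in> prefix_configs r k' J" and k': "k' \<le> k"
    and v: "2*k' \<le> v" "1 \<le> v" "v \<le> 2*k+1"
    and far: "\<And>z. z \<in> D \<Longrightarrow> z + 2 < v \<or> (z + 2 = v \<and> odd z)"
  shows "insert v D \<in> prefix_configs r (Suc k) (Suc J)"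
proof -
  have DV: "D \<subseteq> {1..<2*k'}" using prefix_configs_subset[OF D] .
  have "hard_particle_config {1..<2*Suc k} (G_edges r) (insert v D)"
    by (rule hard_particle_insert[of "{1..<2*k'}"]) (use D DV far k' v in \<open>auto simp: prefix_configs_def\<close>)
  moreover have "v \<notin> D" using DV v(1) by auto
  hence "card (insert v D) = Suc J"
    using D finite_subset[OF DV] by (auto simp: prefix_configs_def)
  ultimately show ?thesis by (simp add: prefix_configs_def)
qed

lemma prefix_configs_split:
  assumes k: "1 \<le> k" "k \<le> r"
  shows "prefix_configs r (Suc k) (Suc J) = prefix_configs r k (Suc J) \<union> insert (2*k+1) ` prefix_configs r k J
           \<union> insert (2*k) ` prefix_configs r (k-1) J"
proof (intro equalityI subsetI)
  fix C assume "C \<in> prefix_configs r (Suc k) (Suc J)"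
  thus "C \<in> prefix_configs r k (Suc J) \<union> insert (2*k+1) ` prefix_configs r k J
           \<union> insert (2*k) ` prefix_configs r (k-1) J"
    by (rule prefix_configs_decompose[OF k])
next
  fix C assume "C \<in> prefix_configs r k (Suc J) \<union> insert (2*k+1) ` prefix_configs r k J
           \<union> insert (2*k) ` prefix_configs r (k-1) J"
  then consider "C \<in> prefix_configs r k (Suc J)"
    | D where "D \<in> prefix_configs r k J" "C = insert (2*k+1) D"
    | D where "D \<in> prefix_configs r (k-1) J" "C = insert (2*k) D" by blast
  thus "C \<in> prefix_configs r (Suc k) (Suc J)"
  proof cases
    case 1
    thus ?thesis by (auto simp: prefix_configs_def hard_particle_config_def)
  next
    case (2 D)
    have "z + 2 < 2*k+1 \<or> (z + 2 = 2*k+1 \<and> odd z)" if "z \<in> D" for z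
    proof -
      have "z < 2*k" using prefix_configs_subset[OF 2(1)] that by auto
      thus ?thesis by presburger
    qed
    thus ?thesis using prefix_configs_extend[OF 2(1)] 2(2) by auto
  next
    case (3 D)
    have "z + 2 < 2*k" if "z \<in> D" for z
    proof -
      have "z < 2*(k-1)" using prefix_configs_subset[OF 3(1)] that by auto
      thus ?thesis by simp
    qed
    thus ?thesis using prefix_configs_extend[OF 3(1)] 3(2) k by auto
  qed
qed


lemma sum_insert_image:
  assumes F: "finite F" and fresh: "\<And>D. D \<in> F \<Longrightarrow> finite D \<and> v \<notin> D"
  shows "(\<Sum>C\<in>insert v ` F. \<Prod>i\<in>C. w i) = w v * (\<Sum>D\<in>F. \<Prod>i\<in>D. (w i :: 'a::comm_ring_1))"
proof -
  have "inj_on (insert v) F"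
    by (rule inj_onI) (metis fresh Diff_insert_absorb)
  hence "(\<Sum>C\<in>insert v ` F. \<Prod>i\<in>C. w i) = (\<Sum>D\<in>F. \<Prod>i\<in>insert v D. w i)"
    by (simp add: sum.reindex)
  also have "\<dots> = (\<Sum>D\<in>F. w v * (\<Prod>i\<in>D. w i))"
    by (rule sum.cong) (use fresh in auto)
  finally show ?thesis by (simp add: sum_distrib_left)
qed

lemma prefix_pf_rec:
  assumes k: "1 \<le> k" "k \<le> r"
  shows "prefix_pf r w (Suc k) (Suc J)
       = prefix_pf r w k (Suc J) + w (2*k+1) * prefix_pf r w k J + w (2*k) * prefix_pf r w (k-1) J"
proof -
  let ?w = "\<lambda>C. \<Prod>i\<in>C. w i"
  let ?A = "prefix_configs r k (Suc J)" and ?B = "insert (2*k+1) ` prefix_configs r k J"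
    and ?C = "insert (2*k) ` prefix_configs r (k-1) J"
  have below: "D \<subseteq> {1..<2*k}" if "D \<in> prefix_configs r k' j" "k' \<le> k" for D k' j
    using prefix_configs_subset[OF that(1)] that(2) by auto
  have fin: "finite D" if "D \<in> prefix_configs r k' j" for D k' j
    using prefix_configs_subset[OF that] finite_subset by blast
  have top: "2*k \<notin> D" if "D \<in> prefix_configs r (k-1) j" for D j
    using prefix_configs_subset[OF that] by (fastforce simp: subset_iff)
  have "?A \<inter> ?B = {}" and "(?A \<union> ?B) \<inter> ?C = {}"
    using below top by (fastforce simp: subset_iff)+
  hence "prefix_pf r w (Suc k) (Suc J) = sum ?w ?A + sum ?w ?B + sum ?w ?C"
    unfolding prefix_pf_def prefix_configs_split[OF k]
    by (simp add: sum.union_disjoint prefix_configs_finite)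
  also have "sum ?w ?B = w (2*k+1) * prefix_pf r w k J"
    unfolding prefix_pf_def by (rule sum_insert_image) (use below fin prefix_configs_finite in fastforce)+
  also have "sum ?w ?C = w (2*k) * prefix_pf r w (k-1) J"
    unfolding prefix_pf_def by (rule sum_insert_image) (use top fin prefix_configs_finite in fastforce)+
  finally show ?thesis by (simp add: prefix_pf_def)
qed

lemma prefix_pf_no_particles: "prefix_pf r w k 0 = 1"
  by (simp add: prefix_pf_def prefix_configs_zero)

lemma prefix_pf_empty: "prefix_pf r w 0 j = (if j = 0 then 1 else 0)"
proof -
  have "prefix_configs r 0 (Suc J) = {}" for J
  proof -
    have "C = {}" if "C \<in> prefix_configs r 0 (Suc J)" for C using prefix_configs_subset[OF that] by simp
    thus ?thesis by (fastforce simp: prefix_configs_def)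
  qed
  thus ?thesis using prefix_pf_no_particles[of r w 0] by (cases j) (simp_all add: prefix_pf_def)
qed

lemma prefix_pf_single: "prefix_pf r w (Suc 0) (Suc J) = (if J = 0 then w 1 else 0)"
proof -
  have "C \<in> prefix_configs r (Suc 0) (Suc J) \<longleftrightarrow> C = {1} \<and> J = 0" for C
  proof
    assume C: "C \<in> prefix_configs r (Suc 0) (Suc J)"
    have "C \<subseteq> {1}" using prefix_configs_subset[OF C] by auto
    moreover have "card C = Suc J" using C by (simp add: prefix_configs_def)
    ultimately
    show "C = {1} \<and> J = 0" by (auto simp: subset_singleton_iff)
  next
    have "\<not> e \<subseteq> {1}" if "e \<in> G_edges r" for e using G_edge_shape[OF that] by fastforce
    thus "C = {1} \<and> J = 0 \<Longrightarrow> C \<in> prefix_configs r (Suc 0) (Suc J)"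
      by (auto simp: prefix_configs_def hard_particle_config_def)
  qed
  hence "prefix_configs r (Suc 0) (Suc J) = (if J = 0 then {{1}} else {})" by auto
  thus ?thesis by (simp add: prefix_pf_def)
qed

definition diag_weight :: "(nat \<Rightarrow> 'a) \<Rightarrow> nat \<Rightarrow> 'a" where
  "diag_weight w i = w (2*i+1)"

definition sub_weight :: "nat \<Rightarrow> (nat \<Rightarrow> 'a::zero) \<Rightarrow> nat \<Rightarrow> 'a" where
  "sub_weight r w i = (if 1 \<le> i \<and> i \<le> r then w (2*i) else 0)"

lemma prefix_pf_step:
  assumes "k \<le> r"
  shows "prefix_pf r w (Suc k) (Suc J)
       = prefix_pf r w k (Suc J) + diag_weight w k * prefix_pf r w k J + sub_weight r w k * prefix_pf r w (k-1) J"
proof (cases k)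
  case 0 thus ?thesis by (simp add: prefix_pf_single prefix_pf_empty diag_weight_def sub_weight_def)
next
  case (Suc k') thus ?thesis using prefix_pf_rec[of k r w J] assms by (simp add: diag_weight_def sub_weight_def)
qed

lemma prefix_pf_vanish: "k < j \<Longrightarrow> k \<le> Suc r \<Longrightarrow> prefix_pf r w k j = 0"
proof (induction k arbitrary: j rule: less_induct)
  case (less k)
  show ?case
  proof (cases k)
    case 0 thus ?thesis using less.prems by (simp add: prefix_pf_empty)
  next
    case (Suc k')
    obtain J where J: "j = Suc J" using less.prems by (cases j) auto
    have "prefix_pf r w (k'-1) J = 0" if "0 < k'"
      using less.IH[of "k' - 1" J] that less.prems Suc J by auto
    thus ?thesis
      using prefix_pf_step[of k' r w J] less.IH[of k'] less.prems Suc J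
      by (auto simp: sub_weight_def)
  qed
qed

text \<open>The partition functions with alternating signs, as coefficients of a polynomial of
  degree k.\<close>
definition signed_pf :: "nat \<Rightarrow> (nat \<Rightarrow> 'a::comm_ring_1) \<Rightarrow> nat \<Rightarrow> nat \<Rightarrow> 'a" where
  "signed_pf r w k l = (if l \<le> k then (-1)^(k-l) * prefix_pf r w k (k-l) else 0)"

text \<open>The signed partition functions obey the recurrence defining the Jacobi polynomials.
  Since a configuration on 2k-1 vertices has at most k particles, the boundary terms vanish.\<close>
lemma signed_pf_step:
  assumes k: "k \<le> r"
  shows "signed_pf r w (Suc k) l = coeff_shift (signed_pf r w k) l
           - diag_weight w k * signed_pf r w k l - sub_weight r w k * coeff_shift (signed_pf r w (k-1)) l"
proof -
  consider "Suc k < l" | "l = Suc k" | "l \<le> k" by linarith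
  thus ?thesis
  proof cases
    case 1
    hence "\<not> l \<le> Suc k" "\<not> l - 1 \<le> k" "\<not> l - 1 \<le> k - 1" "l \<noteq> 0" by auto
    thus ?thesis by (simp add: signed_pf_def coeff_shift_def)
  next
    case 2 thus ?thesis by (cases k) (simp_all add: signed_pf_def coeff_shift_def prefix_pf_no_particles sub_weight_def)
  next
    case 3
    define J where "J = k - l"
    have shift_k: "coeff_shift (signed_pf r w k) l = (-1)^(Suc J) * prefix_pf r w k (Suc J)"
      using 3 k prefix_pf_vanish[of k "Suc k" r w]
      by (auto simp: coeff_shift_def signed_pf_def J_def Suc_diff_le)
    have shift_k1: "sub_weight r w k * coeff_shift (signed_pf r w (k-1)) l
        = sub_weight r w k * ((-1)^J * prefix_pf r w (k-1) J)"
      using 3 k prefix_pf_vanish[of "k-1" k r w]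
      by (cases "k = 0") (auto simp: coeff_shift_def signed_pf_def J_def sub_weight_def)
    have "signed_pf r w (Suc k) l = (-1)^(Suc J) * prefix_pf r w (Suc k) (Suc J)"
      using 3 by (simp add: signed_pf_def J_def Suc_diff_le)
    also have "\<dots> = coeff_shift (signed_pf r w k) l - diag_weight w k * ((-1)^J * prefix_pf r w k J)
        - sub_weight r w k * ((-1)^J * prefix_pf r w (k-1) J)"
      unfolding prefix_pf_step[OF k] shift_k by (simp add: algebra_simps)
    finally show ?thesis using 3 unfolding shift_k1 by (simp add: signed_pf_def J_def)
  qed
qed

lemma jacobi_coeff_signed_pf:
  "k \<le> Suc r \<Longrightarrow> jacobi_coeff (diag_weight w) (sub_weight r w) (Suc k) l = signed_pf r w k l"
proof (induction k arbitrary: l rule: less_induct)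
  case (less k)
  show ?case
  proof (cases k)
    case 0 thus ?thesis by (simp add: signed_pf_def prefix_pf_no_particles)
  next
    case (Suc k')
    have IH1: "jacobi_coeff (diag_weight w) (sub_weight r w) (Suc k') = signed_pf r w k'"
      using less Suc by auto
    have IH0: "sub_weight r w k' * coeff_shift (jacobi_coeff (diag_weight w) (sub_weight r w) k') l
        = sub_weight r w k' * coeff_shift (signed_pf r w (k'-1)) l"
    proof (cases k')
      case (Suc k'')
      hence "jacobi_coeff (diag_weight w) (sub_weight r w) k' = signed_pf r w (k'-1)"
        using less \<open>k = Suc k'\<close> by auto
      thus ?thesis by simp
    qed (simp add: sub_weight_def)
    show ?thesis
      using signed_pf_step[of k' r w l] less.prems Suc IH0 by (simp add: IH1)
  qed
qed


section \<open>The weights of the Q-system form a Lax pair\<close>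

text \<open>The rational identity behind the diagonal zero curvature condition; the hypotheses are
  two instances of the Q-system relation.\<close>
lemma zero_curvature_identity:
  fixes a0 a1 a2 b0 b1 b2 c1 c' :: "'a::field"
  assumes qa: "a2 * a0 = a1 * a1 + b1 * c1" and qb: "b2 * b0 = b1 * b1 + c' * a1"
    and nz: "a0 \<noteq> 0" "a1 \<noteq> 0" "a2 \<noteq> 0" "b0 \<noteq> 0" "b1 \<noteq> 0"
  shows "a0 * b1 / (b0 * a1) + a0 * c' / (b0 * b1) = a1 * b2 / (b1 * a2) + c1 * b2 / (a1 * a2)"
proof -
  have "a0 * b1 / (b0 * a1) + a0 * c' / (b0 * b1) = a0 * (b1 * b1 + c' * a1) / (b0 * a1 * b1)"
    using nz by (simp add: field_simps)
  also have "\<dots> = a0 * b2 / (a1 * b1)" unfolding qb[symmetric] using nz by (simp add: field_simps)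
  also have "\<dots> = b2 * (a1 * a1 + b1 * c1) / (b1 * a1 * a2)" unfolding qa[symmetric] using nz by (simp add: field_simps)
  also have "\<dots> = a1 * b2 / (b1 * a2) + c1 * b2 / (a1 * a2)" using nz by (simp add: field_simps)
  finally show ?thesis .
qed

context Q_system
begin

lemma yw_odd: "yw R (2*i+1) n = R i n * R (Suc i) (n+1) / (R (Suc i) n * R i (n+1))"
  by (simp add: yw_def Let_def)

lemma yw_even: "0 < i \<Longrightarrow> yw R (2*i) n = R (i-1) n * R (Suc i) (n+1) / (R i n * R i (n+1))"
  by (simp add: yw_def Let_def)

lemma zero_curvature_sub_weights:
  assumes i: "1 \<le> i" "i \<le> r"
  shows "yw R (2*i) (n+1) * yw R (2*(i-1)+1) n = yw R (2*i+1) (n+1) * yw R (2*i) n"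
proof -
  obtain j where j: "i = Suc j" using i by (cases i) auto
  have "R j m \<noteq> 0" "R (Suc j) m \<noteq> 0" "R (Suc (Suc j)) m \<noteq> 0" for m
    using R_nonzero i j by auto
  thus ?thesis unfolding j yw_odd yw_even[OF zero_less_Suc] by (simp add: field_simps)
qed

lemma zero_curvature_diag_weights:
  assumes i: "i \<le> r"
  shows "yw R (2*i+1) n - sub_weight r (\<lambda>v. yw R v (n+1)) i
       = yw R (2*i+1) (n+1) - sub_weight r (\<lambda>v. yw R v n) (Suc i)"
proof -
  define c' where "c' = (if Suc i \<le> r then R (Suc (Suc i)) (n+1) else 0)"
  define c1 where "c1 = (if 1 \<le> i then R (i-1) (n+1) else 0)"
  have e0: "sub_weight r (\<lambda>v. yw R v n) (Suc i) = R i n * c' / (R (Suc i) n * R (Suc i) (n+1))"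
    using yw_even[of "Suc i" n] by (auto simp: c'_def sub_weight_def)
  have e1: "sub_weight r (\<lambda>v. yw R v (n+1)) i = c1 * R (Suc i) (n+1+1) / (R i (n+1) * R i (n+1+1))"
    using yw_even[of i "n+1"] i by (auto simp: c1_def sub_weight_def)
  have qa: "R i (n+1+1) * R i n = R i (n+1) * R i (n+1) + R (Suc i) (n+1) * c1"
    using Q_relation[of i "n+1"] i by (cases "i = 0") (auto simp: c1_def power2_eq_square)
  have qb: "R (Suc i) (n+1+1) * R (Suc i) n = R (Suc i) (n+1) * R (Suc i) (n+1) + c' * R i (n+1)"
    using Q_relation[of "Suc i" "n+1"] i by (cases "i = r") (auto simp: c'_def power2_eq_square)
  have "yw R (2*i+1) n + sub_weight r (\<lambda>v. yw R v n) (Suc i)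
      = yw R (2*i+1) (n+1) + sub_weight r (\<lambda>v. yw R v (n+1)) i"
    unfolding yw_odd e0 e1 by (rule zero_curvature_identity[OF qa qb]) (use R_nonzero i in auto)
  thus ?thesis by (simp add: algebra_simps)
qed

sublocale lax_pair r "\<lambda>n. diag_weight (\<lambda>v. yw R v n)" "\<lambda>n. sub_weight r (\<lambda>v. yw R v n)"
proof
  show "sub_weight r (\<lambda>v. yw R v n) 0 = 0" "r < i \<Longrightarrow> sub_weight r (\<lambda>v. yw R v n) i = 0" for n i
    by (simp_all add: sub_weight_def)
  show "sub_weight r (\<lambda>v. yw R v (n+1)) i * diag_weight (\<lambda>v. yw R v n) (i-1)
      = diag_weight (\<lambda>v. yw R v (n+1)) i * sub_weight r (\<lambda>v. yw R v n) i" if "1 \<le> i" "i \<le> r" for i n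
    using zero_curvature_sub_weights[OF that] that by (simp add: sub_weight_def diag_weight_def)
  show "diag_weight (\<lambda>v. yw R v n) i - sub_weight r (\<lambda>v. yw R v (n+1)) i
      = diag_weight (\<lambda>v. yw R v (n+1)) i - sub_weight r (\<lambda>v. yw R v n) (Suc i)" if "i \<le> r" for i n
    using zero_curvature_diag_weights[OF that] by (simp add: diag_weight_def)
qed

lemma R1_evolution: "R 1 (n + int s) = (\<Prod>i<s. diag_weight (\<lambda>v. yw R v (n + int i)) 0) * R 1 n"
proof (induction s)
  case 0 show ?case by simp
next
  case (Suc s)
  have "diag_weight (\<lambda>v. yw R v (n + int s)) 0 = R 1 (n + int s + 1) / R 1 (n + int s)"
    using yw_odd[of 0] by (simp add: diag_weight_def)
  thus ?case using Suc R_nonzero[of 1 "n + int s"] by (simp add: algebra_simps)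
qed

lemma R1_recurrence:
  "(\<Sum>l\<in>{0..Suc r}. signed_pf r (\<lambda>v. yw R v n) (Suc r) l * R 1 (n + int l + int s)) = 0"
proof -
  have "jacobi_coeff (diag_weight (\<lambda>v. yw R v n)) (sub_weight r (\<lambda>v. yw R v n)) (Suc (Suc r))
      = signed_pf r (\<lambda>v. yw R v n) (Suc r)"
    by (intro ext jacobi_coeff_signed_pf) simp
  hence "(\<Sum>l\<in>{0..Suc r}. signed_pf r (\<lambda>v. yw R v n) (Suc r) l
                * (\<Prod>i<l+s. diag_weight (\<lambda>v. yw R v (n + int i)) 0)) = 0"
    using jacobi_recurrence[of n s] by simp
  hence "0 = (\<Sum>l\<in>{0..Suc r}. signed_pf r (\<lambda>v. yw R v n) (Suc r) l
                * (\<Prod>i<l+s. diag_weight (\<lambda>v. yw R v (n + int i)) 0)) * R 1 n"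
    by (simp only: mult_zero_left)
  also have "\<dots> = (\<Sum>l\<in>{0..Suc r}. signed_pf r (\<lambda>v. yw R v n) (Suc r) l
                * ((\<Prod>i<l+s. diag_weight (\<lambda>v. yw R v (n + int i)) 0) * R 1 n))"
    by (simp only: sum_distrib_right mult.assoc)
  also have "\<dots> = (\<Sum>l\<in>{0..Suc r}. signed_pf r (\<lambda>v. yw R v n) (Suc r) l * R 1 (n + int l + int s))"
    using R1_evolution[of n "_ + s"] by (simp add: add.assoc)
  finally show ?thesis by simp
qed

abbreviation Z :: "int \<Rightarrow> nat \<Rightarrow> 'a" where
  "Z n k \<equiv> Z_hp (G_vertices r) (G_edges r) k (\<lambda>v. yw R v n)"

lemma Z_relation:
  assumes m: "n + int r + 1 \<le> m"
  shows "lin_relation r (Z n) (R 1) m"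
  unfolding lin_relation_def
proof (intro allI impI)
  fix i assume "i \<le> r"
  define s where "s = nat (m + int i - n - int r - 1)"
  have "0 = (\<Sum>l\<in>{0..Suc r}. signed_pf r (\<lambda>v. yw R v n) (Suc r) l * R 1 (n + int l + int s))"
    using R1_recurrence[of n s] by simp
  also have "\<dots> = (\<Sum>k\<in>{0..Suc r}. signed_pf r (\<lambda>v. yw R v n) (Suc r) (Suc r - k) * R 1 (n + int (Suc r - k) + int s))"
    by (subst sum.atLeastAtMost_rev) simp
  also have "\<dots> = (\<Sum>k\<in>{0..r+1}. (-1)^k * Z n k * R 1 (m + int i - int k))"
  proof (rule sum.cong)
    fix k assume k: "k \<in> {0..r+1}"
    hence pos: "n + int (Suc r - k) + int s = m + int i - int k" using m by (auto simp: s_def)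
    show "signed_pf r (\<lambda>v. yw R v n) (Suc r) (Suc r - k) * R 1 (n + int (Suc r - k) + int s)
        = (-1)^k * Z n k * R 1 (m + int i - int k)"
      unfolding pos using k by (simp add: signed_pf_def Z_hp_prefix_pf)
  qed simp
  finally show "(\<Sum>k\<in>{0..r+1}. (-1)^k * Z n k * R 1 (m + int i - int k)) = 0" by simp
qed

lemma Z_no_particles: "Z n 0 = 1"
  by (simp add: Z_hp_prefix_pf prefix_pf_no_particles)

text \<open>The partition functions do not depend on n: both are the unique relation on a late
  enough window.\<close>
lemma Z_independent:
  assumes "k \<le> r + 1"
  shows "Z n k = Z n' k"
proof -
  define M where "M = max n n' + int r + 1"
  have rel: "lin_relation r (Z n) (R 1) M" "lin_relation r (Z n') (R 1) M"
    by (rule Z_relation, simp add: M_def)+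
  show ?thesis
    by (rule lin_relation_unique[OF _ rel _ assms]) (use hankel_R_top Z_no_particles in auto)
qed

end


theorem mainTheorem6:
  fixes r :: nat and R :: "nat \<Rightarrow> int \<Rightarrow> 'a::field_char_0"
  assumes "r \<ge> 1"
    and "is_Q_system r R"
    and "alg_indep_rat ({1..r} \<times> {0, 1}) (\<lambda>(\<alpha>, m). R \<alpha> m)"
  shows "\<forall>n m :: int. \<forall>j\<in>{0..r + 1}.
           cons_qty r R j m = Z_hp (G_vertices r) (G_edges r) j (\<lambda>v. yw R v n)"
proof (intro allI ballI)
  interpret Q_system r R by unfold_locales (rule assms(2))
  fix n m :: int and j assume "j \<in> {0..r + 1}"
  hence j: "j \<le> r + 1" by simp
  have rel: "lin_relation r (Z (m - int r - 1)) (R 1) m" by (rule Z_relation) simp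
  have "cons_qty r R j m = Z (m - int r - 1) j"
    by (rule lin_relation_unique[OF _ cons_qty_relation rel _ j])
      (use hankel_R_top cons_qty_0 Z_no_particles in auto)
  also have "\<dots> = Z n j" by (rule Z_independent[OF j])
  finally show "cons_qty r R j m = Z_hp (G_vertices r) (G_edges r) j (\<lambda>v. yw R v n)" .
qed

end
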